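(* The class AsLimAvg is not closed under sum: there exist automata $A_1,A_2$ in AsLimAvg over a common alphabet $\Sigma$ such that no automaton $A$ in AsLimAvg over $\Sigma$ satisfies $L_A(w)=L_{A_1}(w)+L_{A_2}(w)$ for all $w\in\Sigma^\omega$.
   Context: A probabilistic weighted automaton over a finite alphabet $\Sigma$ is a tuple $A=(Q,\rho_I,\Sigma,\delta,\gamma)$ where $Q$ is a finite set of states, $\rho_I$ is a probability distribution on $Q$, $\delta:Q\times\Sigma\to\mathcal D(Q)$ assigns to each state and letter a probability distribution on $Q$, and $\gamma:Q\times\Sigma\times Q\to\mathbb Q$ is a weight function. A run over an infinite word $w=\sigma_1\sigma_2\dots$ is a sequence $r=q_0\sigma_1q_1\sigma_2\dots$ with $\rho_I(q_0)>0$ and $\delta(q_i,\sigma_{i+1})(q_{i+1})>0$ for all $i$; its weight sequence is $\gamma(r)=v_0v_1\dots$ with $v_i=\gamma(q_i,\sigma_{i+1},q_{i+1})$. For each $w$, the probabilities of finite run prefixes induce a probability measure $\mathbb P^A$ on runs over $w$. With $\mathsf{LimAvg}(v)=\liminf_n\frac1n\sum_{i<n}v_i$, AsLimAvg automata define $L^{=1}_A(w)=\sup\{\eta\mid \mathbb P^A(\{r:\mathsf{LimAvg}(\gamma(r))\ge\eta\})=1\}$. *)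

theory Defs
  imports "HOL-Probability.Probability"
begin

text \<open>States and letters are natural numbers;
  the state set is an explicit finite set Q, the alphabet an explicit finite set Sig.\<close>

record pwa =
  states :: "nat set"
  init   :: "nat pmf"
  trans  :: "nat \<Rightarrow> nat \<Rightarrow> nat pmf"
  weight :: "nat \<Rightarrow> nat \<Rightarrow> nat \<Rightarrow> rat"

definition wf_pwa :: "nat set \<Rightarrow> pwa \<Rightarrow> bool" where
  "wf_pwa Sig A \<longleftrightarrow> finite (states A) \<and> set_pmf (init A) \<subseteq> states A \<and>
     (\<forall>q\<in>states A. \<forall>\<sigma>\<in>Sig. set_pmf (trans A q \<sigma>) \<subseteq> states A)"

text \<open>Infinite words over Sig: w i is the letter sigma_(i+1).\<close>
definition words :: "nat set \<Rightarrow> (nat \<Rightarrow> nat) set" where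
  "words Sig = {w. \<forall>i. w i \<in> Sig}"

definition prefix_prob :: "pwa \<Rightarrow> (nat \<Rightarrow> nat) \<Rightarrow> nat list \<Rightarrow> real" where
  "prefix_prob A w qs =
     pmf (init A) (qs ! 0) * (\<Prod>i<length qs - 1. pmf (trans A (qs ! i) (w i)) (qs ! Suc i))"

definition run_measure :: "pwa \<Rightarrow> (nat \<Rightarrow> nat) \<Rightarrow> nat stream measure" where
  "run_measure A w = (THE M. prob_space M \<and>
      sets M = sets (stream_space (count_space UNIV)) \<and>
      (\<forall>qs. qs \<noteq> [] \<longrightarrow>
         emeasure M {r \<in> space M. stake (length qs) r = qs} = ennreal (prefix_prob A w qs)))"

definition run_weights :: "pwa \<Rightarrow> (nat \<Rightarrow> nat) \<Rightarrow> nat stream \<Rightarrow> nat \<Rightarrow> real" where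
  "run_weights A w r i = real_of_rat (weight A (r !! i) (w i) (r !! Suc i))"

definition LimAvg :: "(nat \<Rightarrow> real) \<Rightarrow> ereal" where
  "LimAvg v = liminf (\<lambda>n. ereal ((\<Sum>i<n. v i) / real n))"

definition AsLimAvg_val :: "pwa \<Rightarrow> (nat \<Rightarrow> nat) \<Rightarrow> ereal" where
  "AsLimAvg_val A w = Sup {\<eta> :: ereal.
      emeasure (run_measure A w)
        {r \<in> space (run_measure A w). LimAvg (run_weights A w r) \<ge> \<eta>} = 1}"

end

theory Submission
  imports Defs
begin

text \<open>For a letter \<open>a\<close>, the one-state automaton with weight 1 on \<open>a\<close> and 0 otherwise has as
  value the lower frequency of \<open>a\<close>. The frequencies of 0 and 1 add up to 1 on every eventually
  constant word, but both vanish on a word \<open>0^n\<^sub>0 1^n\<^sub>1 0^n\<^sub>2 \<dots>\<close> whose block lengths grow fast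
  enough.

  Suppose an automaton \<open>A\<close> computed their sum. If a state \<open>q\<close> is reached with positive
  probability after some prefix \<open>u\<close>, then, as \<open>A\<close> has value 1 on \<open>u x^\<omega>\<close>, almost every run of
  \<open>A\<close> from \<open>q\<close> on \<open>x^\<omega>\<close> has all sufficiently long windows of average at least \<open>1 - \<epsilon>\<close>.
  Since there are finitely many states and letters, for every \<open>k\<close> there is a window length
  \<open>N\<^sub>k\<close> beyond which a bad window occurs with probability at most \<open>2^-k\<close>, uniformly. Choosing
  the block lengths so that \<open>N\<^sub>k\<close> is negligible against the length of the preceding blocks,
  the Markov property and Borel--Cantelli show that almost every run of \<open>A\<close> on the block
  word has only finitely many bad blocks, hence limit average at least 1/2, although the
  value of \<open>A\<close> on that word has to be 0.\<close>

lemma space_stream_space_count_space [simp]: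
  "space (stream_space (count_space (UNIV :: nat set))) = UNIV"
  by (simp add: space_stream_space)

lemma stake_eq_iff: "stake n r = qs \<longleftrightarrow> length qs = n \<and> (\<forall>i<n. r !! i = qs ! i)"
  by (auto intro: nth_equalityI)

lemma sets_stake_preimage:
  fixes M :: "nat stream measure"
  assumes "sets M = sets (stream_space (count_space UNIV))"
  shows "{r. stake k r \<in> L} \<in> sets M"
proof -
  have "{r. stake k r \<in> L} = stake k -` L \<inter> space (stream_space (count_space UNIV))" by auto
  also have "\<dots> \<in> sets (stream_space (count_space UNIV))"
    by (rule measurable_sets[OF measurable_stake]) simp
  finally show ?thesis using assms by simp
qed

lemma sets_stake_sdrop_preimage:
  "{r. stake n (sdrop t r) \<in> L} \<in> sets (stream_space (count_space (UNIV :: nat set)))"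
proof -
  have "(\<lambda>r. stake n (sdrop t r)) \<in> measurable (stream_space (count_space (UNIV :: nat set))) (count_space UNIV)"
    by (rule measurable_compose[OF measurable_sdrop measurable_stake])
  from measurable_sets[OF this, of L] show ?thesis by (simp add: vimage_def)
qed

lemma emeasure_stream_space_cylinder:
  fixes D :: "'a pmf"
  shows "emeasure (stream_space (measure_pmf D)) {\<omega>. \<forall>i<n. \<omega> !! i \<in> X i} = (\<Prod>i<n. emeasure (measure_pmf D) (X i))"
proof (induction n arbitrary: X)
  case 0
  interpret prob_space "stream_space (measure_pmf D)"
    by (rule prob_space.prob_space_stream_space) (rule prob_space_measure_pmf)
  show ?case using emeasure_space_1 by (simp add: space_stream_space)
next
  case (Suc n)
  let ?S = "stream_space (measure_pmf D)"
  have space: "space ?S = UNIV" by (simp add: space_stream_space)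
  have sets: "{\<omega>. \<forall>i<m. \<omega> !! i \<in> Y i} \<in> sets ?S" for m Y
  proof (induction m)
    case (Suc m)
    have "{\<omega>. \<omega> !! m \<in> Y m} \<in> sets ?S"
      using measurable_sets[OF measurable_snth[of m "measure_pmf D"], of "Y m"] by (simp add: space vimage_def)
    moreover have "{\<omega>. \<forall>i<Suc m. \<omega> !! i \<in> Y i} = {\<omega>. \<forall>i<m. \<omega> !! i \<in> Y i} \<inter> {\<omega>. \<omega> !! m \<in> Y m}"
      by (auto simp: less_Suc_eq)
    ultimately show ?case using Suc by simp
  qed (use sets.top[of ?S] space in simp)
  have "emeasure ?S {\<omega>. \<forall>i<Suc n. \<omega> !! i \<in> X i} =
     (\<integral>\<^sup>+t. emeasure ?S {x\<in>space ?S. t ## x \<in> {\<omega>. \<forall>i<Suc n. \<omega> !! i \<in> X i}} \<partial>measure_pmf D)"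
    by (rule prob_space.emeasure_stream_space[OF prob_space_measure_pmf sets])
  also have "\<dots> = (\<integral>\<^sup>+t. emeasure ?S {\<omega>. \<forall>i<n. \<omega> !! i \<in> X (Suc i)} * indicator (X 0) t \<partial>measure_pmf D)"
    by (rule nn_integral_cong) (auto simp: space All_less_Suc2 split: split_indicator)
  also have "\<dots> = emeasure ?S {\<omega>. \<forall>i<n. \<omega> !! i \<in> X (Suc i)} * emeasure (measure_pmf D) (X 0)"
    by (simp add: nn_integral_cmult_indicator)
  also have "\<dots> = (\<Prod>i<Suc n. emeasure (measure_pmf D) (X i))"
    using Suc[of "\<lambda>i. X (Suc i)"] by (subst prod.lessThan_Suc_shift) (simp add: mult.commute)
  finally show ?case .
qed

lemma prefix_prob_nonneg: "prefix_prob A w qs \<ge> 0"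
  unfolding prefix_prob_def by (intro mult_nonneg_nonneg prod_nonneg) auto

lemma prefix_prob_snoc:
  assumes "xs \<noteq> []"
  shows "prefix_prob A w (xs @ [y]) = prefix_prob A w xs * pmf (trans A (last xs) (w (length xs - 1))) y"
proof -
  obtain k where k: "length xs = Suc k" using assms by (cases xs) auto
  have "(\<Prod>i<k. pmf (trans A ((xs @ [y]) ! i) (w i)) ((xs @ [y]) ! Suc i))
        = (\<Prod>i<k. pmf (trans A (xs ! i) (w i)) (xs ! Suc i))"
    by (rule prod.cong) (auto simp: nth_append k)
  moreover have "last xs = xs ! k" using k assms by (simp add: last_conv_nth)
  ultimately show ?thesis
    unfolding prefix_prob_def using k by (simp add: nth_append)
qed

text \<open>The run measure exists: draw the initial state and, for every step, an independent
  table assigning a successor to every pair of a state and a letter; the run follows the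
  tables along the word. Outside \<open>states A \<times> Sig\<close> the table is irrelevant and set to 0.\<close>

definition successor_tables :: "nat set \<Rightarrow> pwa \<Rightarrow> (nat \<times> nat \<Rightarrow> nat) pmf" where
  "successor_tables Sig A = Pi_pmf (states A \<times> Sig) 0 (\<lambda>(q, \<sigma>). trans A q \<sigma>)"

definition step_pmf :: "nat set \<Rightarrow> pwa \<Rightarrow> (nat \<times> (nat \<times> nat \<Rightarrow> nat)) pmf" where
  "step_pmf Sig A = pair_pmf (init A) (successor_tables Sig A)"

primrec table_run :: "(nat \<Rightarrow> nat) \<Rightarrow> (nat \<times> (nat \<times> nat \<Rightarrow> nat)) stream \<Rightarrow> nat \<Rightarrow> nat" where
  "table_run w \<omega> 0 = fst (\<omega> !! 0)"
| "table_run w \<omega> (Suc n) = snd (\<omega> !! Suc n) (table_run w \<omega> n, w n)"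

definition table_run_measure :: "nat set \<Rightarrow> pwa \<Rightarrow> (nat \<Rightarrow> nat) \<Rightarrow> nat stream measure" where
  "table_run_measure Sig A w =
     distr (stream_space (measure_pmf (step_pmf Sig A))) (stream_space (count_space UNIV))
       (\<lambda>\<omega>. to_stream (table_run w \<omega>))"

definition total_trans :: "nat set \<Rightarrow> pwa \<Rightarrow> nat \<Rightarrow> nat \<Rightarrow> nat pmf" where
  "total_trans Sig A q \<sigma> = (if (q, \<sigma>) \<in> states A \<times> Sig then trans A q \<sigma> else return_pmf 0)"

lemma measurable_table_run:
  "(\<lambda>\<omega>. table_run w \<omega> n) \<in> measurable (stream_space (measure_pmf D)) (count_space UNIV)"
proof (induction n)
  case 0
  show ?case
    using measurable_compose[OF measurable_snth[of 0 "measure_pmf D"], of fst "count_space UNIV"] by simp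
next
  case (Suc n)
  have "(\<lambda>\<omega>. (\<lambda>q \<omega>. snd (\<omega> !! Suc n) (q, w n)) (table_run w \<omega> n) \<omega>)
          \<in> measurable (stream_space (measure_pmf D)) (count_space UNIV)"
    by (rule measurable_compose_countable[OF _ Suc]) (rule measurable_compose[OF measurable_snth], simp)
  then show ?case by simp
qed

lemma measurable_to_stream_table_run:
  "(\<lambda>\<omega>. to_stream (table_run w \<omega>))
     \<in> measurable (stream_space (measure_pmf D)) (stream_space (count_space UNIV))"
  by (rule measurable_stream_space2) (simp add: to_stream_def measurable_table_run)

lemma table_run_prefix_iff:
  "(\<forall>i<n. table_run w \<omega> i = qs ! i) \<longleftrightarrow>
   (\<forall>i<n. \<omega> !! i \<in> (case i of 0 \<Rightarrow> {d. fst d = qs ! 0}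
                             | Suc j \<Rightarrow> {d. snd d (qs ! j, w j) = qs ! Suc j}))"
proof (induction n)
  case (Suc n)
  then show ?case by (cases n) (auto simp: less_Suc_eq)
qed simp

lemma emeasure_step_pmf_init: "emeasure (measure_pmf (step_pmf Sig A)) {d. fst d = q} = pmf (init A) q"
proof -
  have "emeasure (measure_pmf (step_pmf Sig A)) (fst -` {q}) = emeasure (measure_pmf (map_pmf fst (step_pmf Sig A))) {q}"
    by (rule emeasure_map_pmf[symmetric])
  then show ?thesis by (simp add: step_pmf_def map_fst_pair_pmf emeasure_pmf_single vimage_def)
qed

lemma emeasure_step_pmf_table:
  assumes "finite (states A)" "finite Sig"
  shows "emeasure (measure_pmf (step_pmf Sig A)) {d. snd d (q, \<sigma>) = q'} = pmf (total_trans Sig A q \<sigma>) q'"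
proof -
  have "map_pmf (\<lambda>d. snd d (q, \<sigma>)) (step_pmf Sig A) = map_pmf (\<lambda>G. G (q, \<sigma>)) (map_pmf snd (step_pmf Sig A))"
    by (simp add: pmf.map_comp o_def)
  also have "\<dots> = total_trans Sig A q \<sigma>"
    unfolding step_pmf_def map_snd_pair_pmf successor_tables_def total_trans_def
    by (subst Pi_pmf_component) (use assms in auto)
  finally show ?thesis
    using emeasure_map_pmf[of "\<lambda>d. snd d (q, \<sigma>)" "step_pmf Sig A" "{q'}"]
    by (simp add: emeasure_pmf_single vimage_def)
qed

lemma emeasure_table_run_measure_prefix:
  assumes fin: "finite (states A)" "finite Sig" and len: "length qs = Suc k"
  shows "emeasure (table_run_measure Sig A w) {r. stake (length qs) r = qs} =
     ennreal (pmf (init A) (qs ! 0) * (\<Prod>i<k. pmf (total_trans Sig A (qs ! i) (w i)) (qs ! Suc i)))"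
proof -
  let ?S = "stream_space (measure_pmf (step_pmf Sig A))"
  have "{r. stake (length qs) r = qs} \<in> sets (stream_space (count_space UNIV))"
    using sets_stake_preimage[OF refl, of "length qs" "{qs}"] by simp
  then have "emeasure (table_run_measure Sig A w) {r. stake (length qs) r = qs} =
      emeasure ?S ((\<lambda>\<omega>. to_stream (table_run w \<omega>)) -` {r. stake (length qs) r = qs} \<inter> space ?S)"
    unfolding table_run_measure_def
    by (rule emeasure_distr[OF measurable_to_stream_table_run])
  also have "\<dots> = emeasure ?S {\<omega>. \<forall>i<length qs. \<omega> !! i \<in> (case i of 0 \<Rightarrow> {d. fst d = qs ! 0}
                             | Suc j \<Rightarrow> {d. snd d (qs ! j, w j) = qs ! Suc j})}"
    unfolding table_run_prefix_iff[symmetric]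
    by (simp add: space_stream_space stake_eq_iff to_stream_def)
  also have "\<dots> = ennreal (pmf (init A) (qs ! 0)) * (\<Prod>i<k. ennreal (pmf (total_trans Sig A (qs ! i) (w i)) (qs ! Suc i)))"
    by (simp add: emeasure_stream_space_cylinder len prod.lessThan_Suc_shift
        emeasure_step_pmf_init emeasure_step_pmf_table[OF fin] del: prod.lessThan_Suc)
  finally show ?thesis by (simp add: prod_ennreal ennreal_mult prod_nonneg)
qed

text \<open>Runs leaving the state set have probability 0, so totalising the transitions does not
  change prefix probabilities.\<close>

lemma prefix_prob_total_trans:
  assumes wf: "wf_pwa Sig A" and w: "w \<in> words Sig" and len: "length qs = Suc k"
  shows "pmf (init A) (qs ! 0) * (\<Prod>i<k. pmf (total_trans Sig A (qs ! i) (w i)) (qs ! Suc i)) = prefix_prob A w qs"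
proof (cases "\<forall>i<k. qs ! i \<in> states A")
  case True
  have "(\<Prod>i<k. pmf (total_trans Sig A (qs ! i) (w i)) (qs ! Suc i)) = (\<Prod>i<k. pmf (trans A (qs ! i) (w i)) (qs ! Suc i))"
    using True w by (intro prod.cong) (auto simp: total_trans_def words_def)
  then show ?thesis unfolding prefix_prob_def len by simp
next
  case False
  then obtain j where j: "j < k" "qs ! j \<notin> states A" "\<forall>i<j. qs ! i \<in> states A"
    using exists_least_iff[of "\<lambda>j. j < k \<and> qs ! j \<notin> states A"] by (metis less_trans)
  show ?thesis
  proof (cases j)
    case 0
    have "pmf (init A) (qs ! 0) = 0" using wf j 0 by (auto simp: wf_pwa_def pmf_eq_0_set_pmf)
    then show ?thesis unfolding prefix_prob_def by simp
  next
    case (Suc j')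
    have j': "qs ! j' \<in> states A" "j' < k" using j Suc by auto
    have "set_pmf (trans A (qs ! j') (w j')) \<subseteq> states A"
      using wf j' w by (auto simp: wf_pwa_def words_def)
    then have "pmf (trans A (qs ! j') (w j')) (qs ! Suc j') = 0"
      using j(2) Suc by (metis pmf_eq_0_set_pmf subsetD)
    moreover have "pmf (total_trans Sig A (qs ! j') (w j')) (qs ! Suc j') = pmf (trans A (qs ! j') (w j')) (qs ! Suc j')"
      using j' w by (auto simp: total_trans_def words_def)
    ultimately have "(\<Prod>i<k. pmf (trans A (qs ! i) (w i)) (qs ! Suc i)) = 0"
      and "(\<Prod>i<k. pmf (total_trans Sig A (qs ! i) (w i)) (qs ! Suc i)) = 0"
      using j' by (auto intro!: prod_zero)
    moreover from this(1) have "prefix_prob A w qs = 0" unfolding prefix_prob_def len by simp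
    ultimately show ?thesis by simp
  qed
qed

definition is_run_measure :: "pwa \<Rightarrow> (nat \<Rightarrow> nat) \<Rightarrow> nat stream measure \<Rightarrow> bool" where
  "is_run_measure A w M \<longleftrightarrow> prob_space M \<and>
      sets M = sets (stream_space (count_space UNIV)) \<and>
      (\<forall>qs. qs \<noteq> [] \<longrightarrow>
         emeasure M {r \<in> space M. stake (length qs) r = qs} = ennreal (prefix_prob A w qs))"

lemma is_run_measure_table_run_measure:
  assumes wf: "wf_pwa Sig A" and w: "w \<in> words Sig" and "finite Sig"
  shows "is_run_measure A w (table_run_measure Sig A w)"
  unfolding is_run_measure_def
proof (intro conjI allI impI)
  show "prob_space (table_run_measure Sig A w)"
    unfolding table_run_measure_def
    by (rule prob_space.prob_space_distr[OF prob_space.prob_space_stream_space[OF prob_space_measure_pmf]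
          measurable_to_stream_table_run])
  show "sets (table_run_measure Sig A w) = sets (stream_space (count_space UNIV))"
    by (simp add: table_run_measure_def)
  fix qs :: "nat list" assume "qs \<noteq> []"
  then obtain k where len: "length qs = Suc k" by (cases qs) auto
  have "finite (states A)" using wf by (simp add: wf_pwa_def)
  then show "emeasure (table_run_measure Sig A w) {r \<in> space (table_run_measure Sig A w). stake (length qs) r = qs}
      = ennreal (prefix_prob A w qs)"
    using emeasure_table_run_measure_prefix[OF _ \<open>finite Sig\<close> len] prefix_prob_total_trans[OF wf w len]
    by (simp add: table_run_measure_def)
qed

lemma is_run_measure_unique:
  assumes "is_run_measure A w M" "is_run_measure A w N" shows "M = N"
proof (rule stream_space_eq_sstart[of UNIV])
  show "prob_space M" "prob_space N" "sets M = sets (stream_space (count_space UNIV))"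
    "sets N = sets (stream_space (count_space UNIV))" using assms by (auto simp: is_run_measure_def)
  then have "space M = UNIV" "space N = UNIV"
    by (metis sets_eq_imp_space_eq space_stream_space_count_space)+
  moreover have "sstart UNIV xs = {r. stake (length xs) r = xs}" for xs :: "nat list"
    by (auto simp: sstart_eq stake_eq_iff)
  ultimately show "emeasure M (sstart UNIV xs) = emeasure N (sstart UNIV xs)" if "xs \<noteq> []" for xs
    using assms that by (simp add: is_run_measure_def)
qed auto

lemma is_run_measure_run_measure:
  assumes "wf_pwa Sig A" "w \<in> words Sig" "finite Sig"
  shows "is_run_measure A w (run_measure A w)"
proof -
  have "run_measure A w = (THE M. is_run_measure A w M)"
    unfolding run_measure_def is_run_measure_def ..
  also have "\<dots> = table_run_measure Sig A w"
    using is_run_measure_table_run_measure[OF assms] is_run_measure_unique by blast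
  finally show ?thesis using is_run_measure_table_run_measure[OF assms] by simp
qed


definition lists_of_length :: "nat set \<Rightarrow> nat \<Rightarrow> nat list set" where
  "lists_of_length S k = {xs. set xs \<subseteq> S \<and> length xs = k}"

lemma finite_lists_of_length: "finite S \<Longrightarrow> finite (lists_of_length S k)"
  unfolding lists_of_length_def using finite_lists_length_eq by auto

lemma sum_lists_of_length_add:
  assumes "finite S"
  shows "(\<Sum>xs\<in>lists_of_length S (a + b). f xs) = (\<Sum>ps\<in>lists_of_length S a. \<Sum>rs\<in>lists_of_length S b. f (ps @ rs))"
proof -
  have split: "lists_of_length S (a + b) = (\<lambda>(xs, ys). xs @ ys) ` (lists_of_length S a \<times> lists_of_length S b)"
  proof (intro equalityI subsetI)
    fix xs assume "xs \<in> lists_of_length S (a + b)"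
    then have "(take a xs, drop a xs) \<in> lists_of_length S a \<times> lists_of_length S b"
      by (auto simp: lists_of_length_def dest: in_set_takeD in_set_dropD)
    then show "xs \<in> (\<lambda>(xs, ys). xs @ ys) ` (lists_of_length S a \<times> lists_of_length S b)"
      by (intro image_eqI[of _ _ "(take a xs, drop a xs)"]) auto
  qed (auto simp: lists_of_length_def)
  have "inj_on (\<lambda>(xs, ys). xs @ ys) (lists_of_length S a \<times> lists_of_length S b)"
    by (auto simp: inj_on_def lists_of_length_def)
  then have "(\<Sum>xs\<in>lists_of_length S (a + b). f xs) = (\<Sum>(ps, rs)\<in>lists_of_length S a \<times> lists_of_length S b. f (ps @ rs))"
    unfolding split by (subst sum.reindex) (auto simp: case_prod_unfold)
  then show ?thesis by (simp add: sum.cartesian_product)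
qed

lemma sum_lists_of_length_1: "(\<Sum>xs\<in>lists_of_length S 1. f xs) = (\<Sum>q\<in>S. f [q])"
proof -
  have "lists_of_length S 1 = (\<lambda>q. [q]) ` S" by (auto simp: lists_of_length_def length_Suc_conv)
  then show ?thesis by (simp add: sum.reindex inj_on_def)
qed

lemma sum_prefix_prob_eq_1:
  assumes wf: "wf_pwa Sig A" and w: "w \<in> words Sig"
  shows "(\<Sum>qs\<in>lists_of_length (states A) (Suc k). prefix_prob A w qs) = 1"
proof (induction k)
  have fin: "finite (states A)" and init: "set_pmf (init A) \<subseteq> states A" using wf by (auto simp: wf_pwa_def)
  case 0
  show ?case using sum_pmf_eq_1[OF fin init] by (simp add: sum_lists_of_length_1[simplified] prefix_prob_def)
next
  case (Suc k)
  have fin: "finite (states A)" using wf by (auto simp: wf_pwa_def)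
  have "(\<Sum>qs\<in>lists_of_length (states A) (Suc k + 1). prefix_prob A w qs)
     = (\<Sum>ps\<in>lists_of_length (states A) (Suc k). \<Sum>q\<in>states A. prefix_prob A w (ps @ [q]))"
    by (simp only: sum_lists_of_length_add[OF fin] sum_lists_of_length_1)
  also have "\<dots> = (\<Sum>ps\<in>lists_of_length (states A) (Suc k). prefix_prob A w ps)"
  proof (rule sum.cong[OF refl])
    fix ps assume ps: "ps \<in> lists_of_length (states A) (Suc k)"
    then have "ps \<noteq> []" "length ps = Suc k" "last ps \<in> states A"
      by (auto simp: lists_of_length_def) (metis last_in_set list.size(3) nat.distinct(1) subsetD)
    moreover have "w k \<in> Sig" using w by (auto simp: words_def)
    ultimately show "(\<Sum>q\<in>states A. prefix_prob A w (ps @ [q])) = prefix_prob A w ps"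
      using wf fin by (simp add: prefix_prob_snoc flip: sum_distrib_left)
        (subst sum_pmf_eq_1, auto simp: wf_pwa_def)
  qed
  finally show ?case using Suc by simp
qed

locale run_space =
  fixes Sig :: "nat set" and A :: pwa and w :: "nat \<Rightarrow> nat"
  assumes wf: "wf_pwa Sig A" and word: "w \<in> words Sig" and finite_Sig: "finite Sig"
begin

abbreviation "P \<equiv> run_measure A w"

lemma is_run_measure_P: "is_run_measure A w P"
  by (rule is_run_measure_run_measure[OF wf word finite_Sig])

sublocale p: prob_space P
  using is_run_measure_P by (simp add: is_run_measure_def)

lemma sets_P: "sets P = sets (stream_space (count_space UNIV))"
  using is_run_measure_P by (simp add: is_run_measure_def)

lemma space_P: "space P = UNIV"
  using sets_P by (metis sets_eq_imp_space_eq space_stream_space_count_space)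

lemma sets_P_stake [measurable]: "{r. stake k r \<in> L} \<in> sets P"
  by (rule sets_stake_preimage[OF sets_P])

lemma finite_states: "finite (states A)"
  using wf by (simp add: wf_pwa_def)

lemma measure_prefix: "qs \<noteq> [] \<Longrightarrow> measure P {r. stake (length qs) r = qs} = prefix_prob A w qs"
  using is_run_measure_P unfolding is_run_measure_def space_P by (simp add: measure_def prefix_prob_nonneg)

lemma measure_stake_in_lists_of_length:
  assumes "k > 0"
  shows "measure P {r. stake k r \<in> L \<inter> lists_of_length (states A) k}
       = (\<Sum>qs\<in>L \<inter> lists_of_length (states A) k. prefix_prob A w qs)"
proof -
  have "{r. stake k r \<in> L \<inter> lists_of_length (states A) k}
      = (\<Union>qs\<in>L \<inter> lists_of_length (states A) k. {r. stake k r = qs})" by auto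
  then have "measure P {r. stake k r \<in> L \<inter> lists_of_length (states A) k}
      = (\<Sum>qs\<in>L \<inter> lists_of_length (states A) k. measure P {r. stake k r = qs})"
    using sets_P_stake[of k "{_}"] finite_lists_of_length[OF finite_states]
    by (auto intro!: measure_finite_Union simp: disjoint_family_on_def)
  also have "\<dots> = (\<Sum>qs\<in>L \<inter> lists_of_length (states A) k. prefix_prob A w qs)"
    using assms measure_prefix by (intro sum.cong) (auto simp: lists_of_length_def)
  finally show ?thesis .
qed

lemma AE_stake_in_states:
  assumes "k > 0"
  shows "AE r in P. stake k r \<in> lists_of_length (states A) k"
proof -
  have "measure P {r. stake k r \<in> UNIV \<inter> lists_of_length (states A) k} = 1"
    using measure_stake_in_lists_of_length[OF assms, of UNIV] sum_prefix_prob_eq_1[OF wf word, of "k - 1"] assms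
    by simp
  then show ?thesis using p.AE_prob_1 by force
qed

lemma measure_stake_in:
  assumes "k > 0"
  shows "measure P {r. stake k r \<in> L}
       = (\<Sum>qs\<in>lists_of_length (states A) k. if qs \<in> L then prefix_prob A w qs else 0)"
proof -
  have "measure P {r. stake k r \<in> L} = measure P {r. stake k r \<in> L \<inter> lists_of_length (states A) k}"
    using AE_stake_in_states[OF assms] sets_P_stake[of k L] sets_P_stake[of k "L \<inter> lists_of_length (states A) k"]
    by (intro measure_eq_AE) auto
  also have "\<dots> = (\<Sum>qs\<in>L \<inter> lists_of_length (states A) k. prefix_prob A w qs)"
    by (rule measure_stake_in_lists_of_length[OF assms])
  also have "\<dots> = (\<Sum>qs\<in>lists_of_length (states A) k. if qs \<in> L then prefix_prob A w qs else 0)"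
    by (simp add: sum.If_cases
        finite_lists_of_length[OF finite_states] Int_commute)
  finally show ?thesis .
qed

lemma AE_run_in_states: "AE r in P. \<forall>i. r !! i \<in> states A"
proof -
  have "AE r in P. r !! i \<in> states A" for i
    using AE_stake_in_states[OF zero_less_Suc, of i]
  proof eventually_elim
    case (elim r)
    have "r !! i \<in> set (stake (Suc i) r)"
      by (metis lessI length_stake nth_mem stake_nth)
    then show ?case using elim by (auto simp: lists_of_length_def)
  qed
  then show ?thesis by (simp add: AE_all_countable)
qed

end

definition from_state :: "pwa \<Rightarrow> nat \<Rightarrow> pwa" where
  "from_state A q = A\<lparr>init := return_pmf q\<rparr>"

lemma from_state_simps [simp]:
  "states (from_state A q) = states A" "trans (from_state A q) = trans A"
  "weight (from_state A q) = weight A" "init (from_state A q) = return_pmf q"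
  by (simp_all add: from_state_def)

lemma suffix_in_words: "w \<in> words Sig \<Longrightarrow> (\<lambda>i. w (t + i)) \<in> words Sig"
  by (simp add: words_def)

lemma run_space_from_state:
  "run_space Sig A w \<Longrightarrow> q \<in> states A \<Longrightarrow> run_space Sig (from_state A q) (\<lambda>i. w (t + i))"
  unfolding run_space_def wf_pwa_def using suffix_in_words by auto

lemma prefix_prob_append:
  "rs \<noteq> [] \<Longrightarrow> rs ! 0 = q \<Longrightarrow>
   prefix_prob A w (ps @ rs) = prefix_prob A w (ps @ [q]) * prefix_prob (from_state A q) (\<lambda>i. w (length ps + i)) rs"
proof (induction rs rule: rev_induct)
  case (snoc y rs)
  show ?case
  proof (cases "rs = []")
    case True
    then show ?thesis using snoc by (simp add: prefix_prob_def)
  next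
    case False
    have "rs ! 0 = q" using snoc False by (simp add: nth_append)
    moreover have "last (ps @ rs) = last rs" "length (ps @ rs) - 1 = length ps + (length rs - 1)"
      using False by (auto, cases rs, auto)
    ultimately show ?thesis
      using snoc.IH prefix_prob_snoc[of "ps @ rs" A w y] prefix_prob_snoc[of rs "from_state A q" _ y] False
      by (simp del: append_assoc add: append_assoc[symmetric])
  qed
qed simp

lemma state_and_window_eq_stake:
  "{r. r !! t = q \<and> stake (Suc m) (sdrop t r) \<in> L} = {r. stake (t + Suc m) r \<in> {xs. xs ! t = q \<and> drop t xs \<in> L}}"
proof -
  have split: "stake (t + Suc m) r = stake t r @ stake (Suc m) (sdrop t r)" for r :: "'a stream"
    by (rule stake_add[symmetric])
  have nth: "stake (t + Suc m) r ! t = r !! t" for r :: "'a stream"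
    unfolding split by (simp add: nth_append del: stake.simps)
  have drop: "drop t (stake (t + Suc m) r) = stake (Suc m) (sdrop t r)" for r :: "'a stream"
    by (subst split) (simp del: stake.simps stake_add)
  show ?thesis by (intro Collect_cong) (simp only: mem_Collect_eq nth drop)
qed

context run_space
begin

lemma measure_state_and_window:
  assumes q: "q \<in> states A"
  shows "measure P {r. r !! t = q \<and> stake (Suc m) (sdrop t r) \<in> L} =
     measure P {r. r !! t = q} * measure (run_measure (from_state A q) (\<lambda>i. w (t + i))) {r. stake (Suc m) r \<in> L}"
proof -
  interpret Q: run_space Sig "from_state A q" "\<lambda>i. w (t + i)"
    by (rule run_space_from_state[OF _ q]) unfold_locales
  let ?lists = "lists_of_length (states A)"
  have "measure P {r. r !! t = q \<and> stake (Suc m) (sdrop t r) \<in> L'} =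
     (\<Sum>ps\<in>?lists t. prefix_prob A w (ps @ [q])) * measure Q.P {r. stake (Suc m) r \<in> L'}" for L'
  proof -
    let ?L = "{xs. xs ! t = q \<and> drop t xs \<in> L'}"
    have "measure P {r. stake (t + Suc m) r \<in> ?L}
        = (\<Sum>xs\<in>?lists (t + Suc m). if xs \<in> ?L then prefix_prob A w xs else 0)"
      by (rule measure_stake_in) simp
    also have "\<dots> = (\<Sum>ps\<in>?lists t. \<Sum>rs\<in>?lists (Suc m). if ps @ rs \<in> ?L then prefix_prob A w (ps @ rs) else 0)"
      by (rule sum_lists_of_length_add[OF finite_states])
    also have "\<dots> = (\<Sum>ps\<in>?lists t. \<Sum>rs\<in>?lists (Suc m). prefix_prob A w (ps @ [q]) *
        (if rs \<in> L' then prefix_prob (from_state A q) (\<lambda>i. w (t + i)) rs else 0))"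
    proof (intro sum.cong refl)
      fix ps rs assume "ps \<in> ?lists t" and "rs \<in> ?lists (Suc m)"
      then have "length ps = t" "rs \<noteq> []" by (auto simp: lists_of_length_def)
      then show "(if ps @ rs \<in> ?L then prefix_prob A w (ps @ rs) else 0) = prefix_prob A w (ps @ [q]) *
          (if rs \<in> L' then prefix_prob (from_state A q) (\<lambda>i. w (t + i)) rs else 0)"
        using prefix_prob_append[of rs q A w ps] by (auto simp: nth_append prefix_prob_def)
    qed
    also have "\<dots> = (\<Sum>ps\<in>?lists t. prefix_prob A w (ps @ [q])) * measure Q.P {r. stake (Suc m) r \<in> L'}"
      unfolding Q.measure_stake_in[OF zero_less_Suc] by (simp add: sum_product)
    finally show ?thesis unfolding state_and_window_eq_stake .
  qed
  \<comment> \<open>For \<open>L' = UNIV\<close> the window factor is 1, so the sum over \<open>ps\<close> is \<open>P {r. r !! t = q}\<close>.\<close>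
  from this[of L] this[of UNIV] show ?thesis
    using Q.p.prob_space Q.space_P by simp
qed

end

lemma measure_stake_eq_if_prefix_eq:
  assumes "run_space Sig A w" "run_space Sig A w'" "\<forall>i<m. w i = w' i"
  shows "measure (run_measure A w) {r. stake (Suc m) r \<in> L} = measure (run_measure A w') {r. stake (Suc m) r \<in> L}"
proof -
  interpret W: run_space Sig A w by fact
  interpret W': run_space Sig A w' by fact
  have "prefix_prob A w qs = prefix_prob A w' qs" if "length qs = Suc m" for qs
    unfolding prefix_prob_def using that assms(3) by (intro arg_cong2[where f="(*)"] refl prod.cong) auto
  then have "(\<Sum>qs\<in>lists_of_length (states A) (Suc m). if qs \<in> L then prefix_prob A w qs else 0)
      = (\<Sum>qs\<in>lists_of_length (states A) (Suc m). if qs \<in> L then prefix_prob A w' qs else 0)"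
    by (intro sum.cong) (auto simp: lists_of_length_def)
  then show ?thesis
    unfolding W.measure_stake_in[OF zero_less_Suc] W'.measure_stake_in[OF zero_less_Suc] .
qed

lemma measurable_run_weights [measurable]:
  "(\<lambda>r. run_weights A w r i) \<in> borel_measurable (stream_space (count_space UNIV))"
proof -
  have "(\<lambda>r. (\<lambda>b r. real_of_rat (weight A a (w i) b)) (r !! Suc i) r) \<in> borel_measurable (stream_space (count_space UNIV))" for a
    by (rule measurable_compose_countable[OF measurable_const measurable_snth]) simp
  then have "(\<lambda>r. (\<lambda>a r. real_of_rat (weight A a (w i) (r !! Suc i))) (r !! i) r) \<in> borel_measurable (stream_space (count_space UNIV))"
    by (rule measurable_compose_countable[OF _ measurable_snth])
  then show ?thesis by (simp add: run_weights_def)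
qed

lemma measurable_LimAvg_run_weights:
  "(\<lambda>r. LimAvg (run_weights A w r)) \<in> borel_measurable (stream_space (count_space UNIV))"
  unfolding LimAvg_def by measurable

lemma liminf_le_if_frequently:
  fixes X :: "nat \<Rightarrow> ereal"
  assumes "\<forall>N. \<exists>n\<ge>N. X n \<le> c"
  shows "liminf X \<le> c"
proof (rule ccontr)
  assume "\<not> liminf X \<le> c"
  then have "eventually (\<lambda>n. c < X n) sequentially"
    using le_Liminf_iff[of "liminf X" sequentially X] by auto
  with assms show False by (auto simp: eventually_sequentially not_le[symmetric])
qed

lemma sum_lessThan_add_split:
  fixes f :: "nat \<Rightarrow> 'a :: comm_monoid_add"
  shows "(\<Sum>i<a + b. f i) = (\<Sum>i<a. f i) + (\<Sum>i<b. f (a + i))"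
  by (induction b) (simp_all add: lessThan_Suc ac_simps)

lemma LimAvg_tendsto:
  assumes "(\<lambda>n. (\<Sum>i<n. g i) / real n) \<longlonglongrightarrow> c"
  shows "LimAvg g = ereal c"
  unfolding LimAvg_def by (rule lim_imp_Liminf) (use assms in \<open>auto intro: tendsto_ereal\<close>)

lemma LimAvg_eventually_const:
  assumes "\<forall>i\<ge>t. g i = c"
  shows "LimAvg g = ereal c"
proof (rule LimAvg_tendsto)
  have "(\<lambda>n. c + (\<Sum>i<t. g i - c) / real n) \<longlonglongrightarrow> c + 0"
    by (intro tendsto_add tendsto_const lim_const_over_n)
  moreover have "\<forall>\<^sub>F n in sequentially. c + (\<Sum>i<t. g i - c) / real n = (\<Sum>i<n. g i) / real n"
  proof (rule eventually_sequentiallyI[of "Suc t"])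
    fix n assume n: "Suc t \<le> n"
    then have "(\<Sum>i<n. g i - c) = (\<Sum>i<t. g i - c)"
      using assms by (intro sum.mono_neutral_right) auto
    then show "c + (\<Sum>i<t. g i - c) / real n = (\<Sum>i<n. g i) / real n"
      using n by (simp add: sum_subtractf field_simps)
  qed
  ultimately show "(\<lambda>n. (\<Sum>i<n. g i) / real n) \<longlonglongrightarrow> c"
    by (simp add: Lim_transform_eventually)
qed

lemma block_containing:
  fixes t :: "nat \<Rightarrow> nat"
  assumes t: "strict_mono t" and n: "t a \<le> n"
  shows "\<exists>k\<ge>a. t k \<le> n \<and> n < t (Suc k)"
proof -
  define k0 where "k0 = (LEAST k. n < t k)"
  have "n < t (Suc n)" using strict_mono_imp_increasing[OF t, of "Suc n"] by simp
  then have k0: "n < t k0" unfolding k0_def by (rule LeastI)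
  have "a < k0"
    using k0 n strict_mono_leD[OF t] by (metis le_trans not_le)
  then obtain k where k: "k0 = Suc k" "a \<le> k" by (cases k0) auto
  have "\<not> n < t k" using not_less_Least[of k "\<lambda>k. n < t k"] k unfolding k0_def by simp
  then show ?thesis using k k0 by auto
qed

lemma sum_blocks_lower_bound:
  fixes v :: "nat \<Rightarrow> real"
  assumes t: "strict_mono t" and "K \<le> k"
    and good: "\<And>k. K \<le> k \<Longrightarrow> (1 - \<epsilon>) * real (t (Suc k) - t k) \<le> (\<Sum>i<t (Suc k) - t k. v (t k + i))"
  shows "(\<Sum>i<t K. v i) + (1 - \<epsilon>) * (real (t k) - real (t K)) \<le> (\<Sum>i<t k. v i)"
  using \<open>K \<le> k\<close>
proof (induction k rule: dec_induct)
  case (step k)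
  have "t (Suc k) = t k + (t (Suc k) - t k)" using strict_monoD[OF t, of k "Suc k"] by simp
  then have "(\<Sum>i<t (Suc k). v i) = (\<Sum>i<t k. v i) + (\<Sum>i<t (Suc k) - t k. v (t k + i))"
    by (metis sum_lessThan_add_split)
  then show ?case using step good[of k] strict_monoD[OF t, of k "Suc k"] by (simp add: algebra_simps of_nat_diff)
qed simp

lemma sum_ge_of_good_blocks:
  fixes v :: "nat \<Rightarrow> real" and t N :: "nat \<Rightarrow> nat"
  assumes bound: "\<And>i. \<bar>v i\<bar> \<le> real M"
    and t: "strict_mono t"
    and eps: "0 < \<epsilon>" "(real M + 2) * \<epsilon> \<le> 1/4"
    and N_le: "\<And>k. N k \<le> t (Suc k) - t k"
    and N_small: "\<And>k. K \<le> k \<Longrightarrow> real (N k) \<le> \<epsilon> * real (t k)"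
    and good: "\<And>k m. K \<le> k \<Longrightarrow> N k \<le> m \<Longrightarrow> m \<le> t (Suc k) - t k \<Longrightarrow> (1 - \<epsilon>) * real m \<le> (\<Sum>i<m. v (t k + i))"
    and n: "t K \<le> n"
  shows "(3/4) * real n - (real M + 1) * real (t K) \<le> (\<Sum>i<n. v i)"
proof -
  have "- real M \<le> v i" for i using bound[of i] by linarith
  then have lower: "- real M * real m \<le> (\<Sum>i<m. v (j + i))" for j m
    using sum_bounded_below[of "{..<m}" "- real M" "\<lambda>i. v (j + i)"] by (simp add: mult.commute)
  have "2 * \<epsilon> \<le> (real M + 2) * \<epsilon>" using eps by (intro mult_right_mono) auto
  then have eps_le: "\<epsilon> \<le> 1/4" using eps by linarith
  obtain k where k: "K \<le> k" "t k \<le> n" "n < t (Suc k)" using block_containing[OF t n] by auto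
  define m where "m = n - t k"
  have nm: "n = t k + m" using k by (simp add: m_def)
  have "\<epsilon> * real (t k) \<le> \<epsilon> * real n" using k eps by (intro mult_left_mono) auto
  then have Nk: "real (N k) \<le> \<epsilon> * real n" using N_small[OF k(1)] by simp
  have "(1 - \<epsilon>) * real m - (real M + 1) * real (N k) \<le> (\<Sum>i<m. v (t k + i))"
  proof (cases "N k \<le> m")
    case True
    then have "(1 - \<epsilon>) * real m \<le> (\<Sum>i<m. v (t k + i))"
      using k by (intro good) (auto simp: m_def)
    moreover have "0 \<le> (real M + 1) * real (N k)" by simp
    ultimately show ?thesis by linarith
  next
    case False
    then have "(real M + 1) * real m \<le> (real M + 1) * real (N k)" by (intro mult_left_mono) auto
    moreover have "0 \<le> \<epsilon> * real m" using eps by simp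
    ultimately have "(1 - \<epsilon>) * real m + real M * real m \<le> (real M + 1) * real (N k)"
      by (simp add: algebra_simps)
    then show ?thesis using lower[of m "t k"] by linarith
  qed
  moreover have "(\<Sum>i<n. v i) = (\<Sum>i<t k. v i) + (\<Sum>i<m. v (t k + i))"
    unfolding nm sum_lessThan_add_split ..
  moreover have "(\<Sum>i<t K. v i) + (1 - \<epsilon>) * (real (t k) - real (t K)) \<le> (\<Sum>i<t k. v i)"
    using k(1) N_le by (intro sum_blocks_lower_bound[OF t] good) auto
  moreover have "- real M * real (t K) \<le> (\<Sum>i<t K. v i)" using lower[of "t K" 0] by simp
  moreover have "(real M + 1) * real (N k) \<le> (real M + 1) * (\<epsilon> * real n)"
    using Nk by (intro mult_left_mono) auto
  moreover have "(real M + 2) * \<epsilon> * real n \<le> 1/4 * real n" using eps by (intro mult_right_mono) auto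
  moreover have "0 \<le> \<epsilon> * real (t K)" using eps by simp
  moreover have "real (t K) \<le> real n" using n by simp
  ultimately show ?thesis using eps_le nm by (simp add: algebra_simps)
qed

lemma LimAvg_ge_of_good_blocks:
  fixes v :: "nat \<Rightarrow> real" and t N :: "nat \<Rightarrow> nat"
  assumes bound: "\<And>i. \<bar>v i\<bar> \<le> real M"
    and t: "strict_mono t"
    and eps: "0 < \<epsilon>" "(real M + 2) * \<epsilon> \<le> 1/4"
    and N_le: "\<And>k. N k \<le> t (Suc k) - t k"
    and N_small: "\<And>k. 1 \<le> k \<Longrightarrow> real (N k) \<le> \<epsilon> * real (t k)"
    and good: "\<And>k m. K \<le> k \<Longrightarrow> N k \<le> m \<Longrightarrow> m \<le> t (Suc k) - t k \<Longrightarrow> (1 - \<epsilon>) * real m \<le> (\<Sum>i<m. v (t k + i))"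
  shows "ereal (1/2) \<le> LimAvg v"
proof -
  define K' where "K' = max K 1"
  note S_lower = sum_ge_of_good_blocks[OF bound t eps N_le, of K']
  have "\<forall>\<^sub>F n in sequentially. ereal (1/2) \<le> ereal ((\<Sum>i<n. v i) / real n)"
  proof (rule eventually_sequentiallyI[of "t K' + 4 * (M + 1) * t K' + 1"])
    fix n assume n: "t K' + 4 * (M + 1) * t K' + 1 \<le> n"
    have "real (4 * (M + 1) * t K') \<le> real n" using n by linarith
    then have "4 * ((real M + 1) * real (t K')) \<le> real n" by (simp add: algebra_simps)
    moreover have "(3/4) * real n - (real M + 1) * real (t K') \<le> (\<Sum>i<n. v i)"
      using n N_small good by (intro S_lower) (auto simp: K'_def)
    ultimately have "1/2 * real n \<le> (\<Sum>i<n. v i)" by linarith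
    then show "ereal (1/2) \<le> ereal ((\<Sum>i<n. v i) / real n)" using n by (simp add: field_simps)
  qed
  then show ?thesis unfolding LimAvg_def by (rule Liminf_bounded)
qed

lemma LimAvg_le_of_frequent_bad_windows:
  fixes f :: "nat \<Rightarrow> real"
  assumes eps: "0 < \<epsilon>" "\<epsilon> \<le> 1" and bad: "\<forall>N. \<exists>m\<ge>N. (\<Sum>i<m. f (t + i)) < (1 - \<epsilon>) * real m"
  shows "LimAvg f \<le> ereal (1 - 3 * \<epsilon> / 4)"
  unfolding LimAvg_def
proof (rule liminf_le_if_frequently, intro allI)
  fix N'
  define s where "s = (\<Sum>i<t. f i)"
  define B where "B = \<bar>s\<bar> + real t"
  obtain m where m: "N' + nat \<lceil>4 * B / \<epsilon>\<rceil> + 1 \<le> m" "(\<Sum>i<m. f (t + i)) < (1 - \<epsilon>) * real m"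
    using bad by blast
  define n where "n = t + m"
  have "4 * B / \<epsilon> \<le> real m" using m(1) by linarith
  then have mB: "4 * B \<le> \<epsilon> * real m" using eps by (simp add: field_simps)
  have npos: "0 < real n" using m(1) by (simp add: n_def)
  have "0 \<le> (1 - 3 * \<epsilon> / 4) * real t" using eps by simp
  then have s: "s - (1 - 3 * \<epsilon> / 4) * real t \<le> B" unfolding B_def by linarith
  have "(\<Sum>i<n. f i) = s + (\<Sum>i<m. f (t + i))" unfolding n_def s_def by (rule sum_lessThan_add_split)
  also have "\<dots> \<le> s + (1 - \<epsilon>) * real m" using m(2) by simp
  also have "\<dots> \<le> (1 - 3 * \<epsilon> / 4) * real n"
  proof -
    have "(1 - 3 * \<epsilon> / 4) * real n = (1 - 3 * \<epsilon> / 4) * real t + real m - 3/4 * (\<epsilon> * real m)"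
      and "(1 - \<epsilon>) * real m = real m - \<epsilon> * real m"
      by (simp_all add: n_def algebra_simps)
    then show ?thesis using s mB B_def by linarith
  qed
  finally have "(\<Sum>i<n. f i) / real n \<le> 1 - 3 * \<epsilon> / 4" using npos by (simp add: field_simps)
  moreover have "N' \<le> n" using m(1) by (simp add: n_def)
  ultimately show "\<exists>n\<ge>N'. ereal ((\<Sum>i<n. f i) / real n) \<le> ereal (1 - 3 * \<epsilon> / 4)" by auto
qed

context run_space
begin

lemma sets_P_LimAvg_ge: "{r. \<eta> \<le> LimAvg (run_weights A w r)} \<in> sets P"
proof -
  have "(\<lambda>r. LimAvg (run_weights A w r)) -` {\<eta>..} \<inter> space (stream_space (count_space UNIV))
      \<in> sets (stream_space (count_space UNIV))"
    by (rule measurable_sets[OF measurable_LimAvg_run_weights]) simp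
  then show ?thesis using sets_P by (simp add: vimage_def)
qed

lemma AsLimAvg_val_ge_if_AE:
  assumes "AE r in P. \<eta> \<le> LimAvg (run_weights A w r)"
  shows "\<eta> \<le> AsLimAvg_val A w"
proof -
  have "emeasure P {r. \<eta> \<le> LimAvg (run_weights A w r)} = 1"
    by (rule p.emeasure_eq_1_AE[OF sets_P_LimAvg_ge]) (use assms in simp)
  then show ?thesis unfolding AsLimAvg_val_def space_P by (intro Sup_upper) simp
qed

lemma AE_LimAvg_ge_if_less_AsLimAvg_val:
  assumes "\<eta> < AsLimAvg_val A w"
  shows "AE r in P. \<eta> \<le> LimAvg (run_weights A w r)"
proof -
  obtain x where x: "emeasure P {r. x \<le> LimAvg (run_weights A w r)} = 1" "\<eta> < x"
    using assms unfolding AsLimAvg_val_def space_P less_Sup_iff by auto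
  have "AE r in P. x \<le> LimAvg (run_weights A w r)"
    by (rule p.AE_I_eq_1) (use x sets_P_LimAvg_ge in \<open>simp_all add: space_P\<close>)
  then show ?thesis by eventually_elim (use x(2) in auto)
qed

lemma AsLimAvg_val_eq_if_AE:
  assumes "AE r in P. LimAvg (run_weights A w r) = c"
  shows "AsLimAvg_val A w = c"
proof (rule antisym)
  show "c \<le> AsLimAvg_val A w"
    by (rule AsLimAvg_val_ge_if_AE) (use assms in \<open>auto elim: eventually_mono\<close>)
  show "AsLimAvg_val A w \<le> c"
  proof (rule ccontr)
    assume "\<not> AsLimAvg_val A w \<le> c"
    then obtain \<eta> where \<eta>: "c < \<eta>" "\<eta> < AsLimAvg_val A w" using dense[of c] by (auto simp: not_le)
    have "AE r in P. False"
      using AE_LimAvg_ge_if_less_AsLimAvg_val[OF \<eta>(2)] assms by eventually_elim (use \<eta>(1) in auto)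
    then show False by simp
  qed
qed

end

definition two_letters :: "nat set" where
  "two_letters = {0, 1}"

definition letter_counter :: "nat \<Rightarrow> pwa" where
  "letter_counter a = \<lparr>states = {0}, init = return_pmf 0, trans = (\<lambda>q \<sigma>. return_pmf 0),
     weight = (\<lambda>q \<sigma> q'. if \<sigma> = a then 1 else 0)\<rparr>"

definition freq :: "nat \<Rightarrow> (nat \<Rightarrow> nat) \<Rightarrow> ereal" where
  "freq a w = LimAvg (\<lambda>i. if w i = a then 1 else 0)"

lemma wf_letter_counter: "wf_pwa two_letters (letter_counter a)"
  by (simp add: wf_pwa_def letter_counter_def)

lemma AsLimAvg_val_letter_counter:
  assumes "w \<in> words two_letters"
  shows "AsLimAvg_val (letter_counter a) w = freq a w"
proof -
  interpret run_space two_letters "letter_counter a" w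
    by unfold_locales (use wf_letter_counter assms in \<open>simp_all add: two_letters_def\<close>)
  have "run_weights (letter_counter a) w r = (\<lambda>i. if w i = a then 1 else 0)" for r
    by (simp add: run_weights_def letter_counter_def fun_eq_iff)
  then show ?thesis by (intro AsLimAvg_val_eq_if_AE) (simp add: freq_def)
qed

lemma freq_sum_eventually_const:
  assumes "\<forall>i\<ge>t. w i = x" "x \<in> two_letters"
  shows "freq 0 w + freq 1 w = 1"
proof -
  have "freq a w = ereal (if x = a then 1 else 0)" for a
    unfolding freq_def using assms(1) by (intro LimAvg_eventually_const[of t]) auto
  then show ?thesis using assms(2) by (auto simp: two_letters_def)
qed

definition block_word :: "(nat \<Rightarrow> nat) \<Rightarrow> nat \<Rightarrow> nat" where
  "block_word t i = (LEAST k. i < t (Suc k)) mod 2"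

lemma block_word_in_words: "block_word t \<in> words two_letters"
  by (auto simp: words_def block_word_def two_letters_def)

lemma block_word_eq:
  assumes t: "strict_mono t" and "t k \<le> i" "i < t (Suc k)"
  shows "block_word t i = k mod 2"
proof -
  have "(LEAST k. i < t (Suc k)) = k"
  proof (rule Least_equality)
    show "k \<le> j" if "i < t (Suc j)" for j
    proof (rule ccontr)
      assume "\<not> k \<le> j"
      then have "t (Suc j) \<le> t k" using strict_mono_leD[OF t] by simp
      then show False using that assms(2) by simp
    qed
  qed (rule assms(3))
  then show ?thesis by (simp add: block_word_def)
qed

lemma count_block_word_le:
  assumes t: "strict_mono t" and a: "k mod 2 \<noteq> a"
  shows "(\<Sum>i<t (Suc k). if block_word t i = a then 1 else 0 :: real) \<le> real (t k)"
proof -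
  define d where "d = t (Suc k) - t k"
  have tS: "t (Suc k) = t k + d" using strict_monoD[OF t, of k "Suc k"] by (simp add: d_def)
  have "block_word t (t k + i) = k mod 2" if "i < d" for i
    by (rule block_word_eq[OF t]) (use that tS in auto)
  then have "(\<Sum>i<d. if block_word t (t k + i) = a then 1 else 0 :: real) = 0"
    using a by (intro sum.neutral) auto
  moreover have "(\<Sum>i<t k. if block_word t i = a then 1 else 0 :: real) \<le> (\<Sum>i<t k. 1)"
    by (intro sum_mono) auto
  ultimately show ?thesis unfolding tS sum_lessThan_add_split by simp
qed

lemma freq_block_word:
  assumes t: "strict_mono t" and growth: "\<And>k. (real k + 2) * real (t k) \<le> real (t (Suc k))"
  shows "freq a (block_word t) = 0"
proof (rule antisym)
  show "0 \<le> freq a (block_word t)" unfolding freq_def LimAvg_def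
    by (rule Liminf_bounded) (auto intro!: always_eventually sum_nonneg divide_nonneg_nonneg)
  show "freq a (block_word t) \<le> 0"
  proof (rule ereal_le_epsilon2)
    fix e :: real assume e: "0 < e"
    have "freq a (block_word t) \<le> ereal e" unfolding freq_def LimAvg_def
    proof (rule liminf_le_if_frequently, intro allI)
      fix N
      define k where "k = 2 * (N + nat \<lceil>1/e\<rceil>) + (if a = 0 then 1 else 0)"
      have "k mod 2 \<noteq> a" "N \<le> k" by (auto simp: k_def)
      moreover have "1/e \<le> real k + 2"
        using real_nat_ceiling_ge[of "1/e"] of_nat_mono[of "nat \<lceil>1/e\<rceil>" k] by (simp add: k_def)
      ultimately have k: "k mod 2 \<noteq> a" "N \<le> k" "1/e \<le> real k + 2" by auto
      define n where "n = t (Suc k)"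
      have "N \<le> n" using k(2) strict_mono_imp_increasing[OF t, of "Suc k"] by (simp add: n_def)
      have n: "0 < real n" using strict_monoD[OF t, of k "Suc k"] by (simp add: n_def)
      have "1 * real (t k) \<le> (e * (real k + 2)) * real (t k)"
        using k(3) e by (intro mult_right_mono) (auto simp: field_simps)
      also have "\<dots> \<le> e * real n"
        using growth[of k] e by (simp add: n_def mult.assoc mult_left_mono)
      finally have "(\<Sum>i<n. if block_word t i = a then 1 else 0 :: real) \<le> e * real n"
        using count_block_word_le[OF t k(1)] by (simp add: n_def)
      then have "(\<Sum>i<n. if block_word t i = a then 1 else 0 :: real) / real n \<le> e"
        using n by (simp add: field_simps)
      then show "\<exists>n\<ge>N. ereal ((\<Sum>i<n. if block_word t i = a then 1 else 0) / real n) \<le> ereal e"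
        using \<open>N \<le> n\<close> by auto
    qed
    then show "freq a (block_word t) \<le> 0 + ereal e" by simp
  qed
qed

lemma (in run_space) sets_P_late_bad_window:
  "{r. \<exists>m\<ge>N. (\<Sum>i<m. run_weights A w r (t + i)) < c * real m} \<in> sets P"
proof -
  have "(\<lambda>r. \<Sum>i<m. run_weights A w r (t + i)) -` {..<c * real m}
      \<inter> space (stream_space (count_space UNIV)) \<in> sets (stream_space (count_space UNIV))" for m
    by (rule measurable_sets[OF borel_measurable_sum[OF measurable_run_weights]]) simp
  moreover have "{r. \<exists>m\<ge>N. (\<Sum>i<m. run_weights A w r (t + i)) < c * real m}
      = (\<Union>m\<in>{N..}. (\<lambda>r. \<Sum>i<m. run_weights A w r (t + i)) -` {..<c * real m}
           \<inter> space (stream_space (count_space UNIV)))"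
    by auto
  ultimately show ?thesis using sets_P by auto
qed

lemma (in run_space) measure_late_bad_window_tendsto_0:
  assumes eps: "0 < \<epsilon>" "\<epsilon> \<le> 1"
    and AE: "AE r in P. ereal (1 - \<epsilon> / 2) \<le> LimAvg (run_weights A w r)"
  shows "(\<lambda>N. measure P {r. \<exists>m\<ge>N. (\<Sum>i<m. run_weights A w r (t + i)) < (1 - \<epsilon>) * real m}) \<longlonglongrightarrow> 0"
proof -
  define C where "C N = {r. \<exists>m\<ge>N. (\<Sum>i<m. run_weights A w r (t + i)) < (1 - \<epsilon>) * real m}" for N
  have sets_C: "range C \<subseteq> sets P" using sets_P_late_bad_window by (auto simp: C_def)
  have "AE r in P. r \<notin> (\<Inter>N. C N)"
    using AE
  proof eventually_elim
    case (elim r)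
    show ?case
    proof
      assume "r \<in> (\<Inter>N. C N)"
      then have "LimAvg (run_weights A w r) \<le> ereal (1 - 3 * \<epsilon> / 4)"
        by (intro LimAvg_le_of_frequent_bad_windows[OF eps]) (auto simp: C_def)
      with elim have "ereal (1 - \<epsilon> / 2) \<le> ereal (1 - 3 * \<epsilon> / 4)" by (rule order_trans)
      with eps show False by simp
    qed
  qed
  moreover have "(\<Inter>N. C N) \<in> sets P" using sets_C by auto
  ultimately have "(\<Inter>N. C N) \<in> null_sets P" by (simp add: AE_iff_null_sets)
  then have "measure P (\<Inter>N. C N) = 0" by (simp add: measure_def null_setsD1)
  moreover have "decseq C" by (auto simp: decseq_def C_def) (meson order_trans)
  ultimately show ?thesis
    using p.finite_Lim_measure_decseq[OF sets_C] unfolding C_def by simp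
qed

lemma sum_stake_sdrop:
  assumes "m \<le> H"
  shows "(\<Sum>i<m. f (stake (Suc H) (sdrop t r) ! i) (stake (Suc H) (sdrop t r) ! Suc i))
       = (\<Sum>i<m. f (r !! (t + i)) (r !! Suc (t + i)))"
proof (rule sum.cong[OF refl])
  fix i assume "i \<in> {..<m}"
  then have "i < Suc H" "Suc i < Suc H" using assms by auto
  then show "f (stake (Suc H) (sdrop t r) ! i) (stake (Suc H) (sdrop t r) ! Suc i) = f (r !! (t + i)) (r !! Suc (t + i))"
    by (simp only: stake_nth sdrop_snth add_Suc_right)
qed

locale sum_of_freqs_automaton =
  fixes A :: pwa
  assumes wf: "wf_pwa two_letters A"
    and computes_sum: "\<forall>w\<in>words two_letters. AsLimAvg_val A w = freq 0 w + freq 1 w"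
begin

lemma run_space: "w \<in> words two_letters \<Longrightarrow> run_space two_letters A w"
  by unfold_locales (use wf in \<open>auto simp: two_letters_def\<close>)

lemma finite_states: "finite (states A)"
  using wf by (simp add: wf_pwa_def)

definition weight_bound :: nat where
  "weight_bound = nat \<lceil>Max (insert 0 ((\<lambda>(q, \<sigma>, q'). \<bar>real_of_rat (weight A q \<sigma> q')\<bar>) ` (states A \<times> two_letters \<times> states A)))\<rceil>"

lemma abs_weight_le_weight_bound:
  assumes "q \<in> states A" "\<sigma> \<in> two_letters" "q' \<in> states A"
  shows "\<bar>real_of_rat (weight A q \<sigma> q')\<bar> \<le> real weight_bound"
proof -
  let ?X = "insert 0 ((\<lambda>(q, \<sigma>, q'). \<bar>real_of_rat (weight A q \<sigma> q')\<bar>) ` (states A \<times> two_letters \<times> states A))"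
  have "finite ?X" using finite_states by (simp add: two_letters_def)
  moreover have "\<bar>real_of_rat (weight A q \<sigma> q')\<bar> \<in> ?X"
    using assms by (intro insertI2 image_eqI[where x="(q, \<sigma>, q')"]) auto
  ultimately have "\<bar>real_of_rat (weight A q \<sigma> q')\<bar> \<le> Max ?X" by (rule Max_ge)
  also have "\<dots> \<le> real weight_bound" unfolding weight_bound_def by linarith
  finally show ?thesis .
qed

definition eps :: real where
  "eps = 1 / (4 * (real weight_bound + 2))"

lemma eps_pos: "0 < eps"
  by (simp add: eps_def)

lemma eps_le_1: "eps \<le> 1"
  by (simp add: eps_def)

lemma eps_bound: "(real weight_bound + 2) * eps \<le> 1/4"
  by (simp add: eps_def)

definition bad_prefixes :: "nat \<Rightarrow> nat \<Rightarrow> nat \<Rightarrow> nat list set" where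
  "bad_prefixes x N H = {xs. \<exists>m. N \<le> m \<and> m \<le> H \<and>
     (\<Sum>i<m. real_of_rat (weight A (xs ! i) x (xs ! Suc i))) < (1 - eps) * real m}"

definition reachable :: "nat set" where
  "reachable = {q \<in> states A. \<exists>u\<in>words two_letters. \<exists>t. 0 < measure (run_measure A u) {r. r !! t = q}}"

lemma late_bad_window_if_bad_prefix:
  assumes "\<forall>i. z (t + i) = x" and "stake (Suc H) (sdrop t r) \<in> bad_prefixes x N H"
  shows "\<exists>m\<ge>N. (\<Sum>i<m. run_weights A z r (t + i)) < (1 - eps) * real m"
proof -
  obtain m where m: "N \<le> m" "m \<le> H" and bad:
    "(\<Sum>i<m. real_of_rat (weight A (stake (Suc H) (sdrop t r) ! i) x (stake (Suc H) (sdrop t r) ! Suc i)))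
      < (1 - eps) * real m"
    using assms(2) by (auto simp: bad_prefixes_def)
  have "(\<Sum>i<m. run_weights A z r (t + i)) = (\<Sum>i<m. real_of_rat (weight A (r !! (t + i)) x (r !! Suc (t + i))))"
    using assms(1) by (intro sum.cong) (auto simp: run_weights_def)
  also have "\<dots> = (\<Sum>i<m. real_of_rat (weight A (stake (Suc H) (sdrop t r) ! i) x (stake (Suc H) (sdrop t r) ! Suc i)))"
    by (rule sum_stake_sdrop[OF m(2), symmetric])
  finally show ?thesis using bad m(1) by auto
qed

text \<open>If \<open>q\<close> is reached at time \<open>t\<close> on \<open>u\<close>, consider the word \<open>z = u[0, t) x^\<omega>\<close>: its value is 1,
  so long bad windows from time \<open>t\<close> become unlikely, and by the Markov property this
  bounds their probability from \<open>q\<close> on \<open>x^\<omega>\<close>.\<close>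

lemma bad_prefixes_prob_small:
  assumes q: "q \<in> reachable" and x: "x \<in> two_letters" and \<delta>: "0 < \<delta>"
  shows "\<exists>N. \<forall>N'\<ge>N. \<forall>H. measure (run_measure (from_state A q) (\<lambda>_. x)) {r. stake (Suc H) r \<in> bad_prefixes x N' H} \<le> \<delta>"
proof -
  obtain u t where q: "q \<in> states A" and u: "u \<in> words two_letters"
    and reach: "0 < measure (run_measure A u) {r. r !! t = q}"
    using q by (auto simp: reachable_def)
  define z where "z i = (if i < t then u i else x)" for i
  have z: "z \<in> words two_letters" using u x by (auto simp: words_def z_def)
  have shift: "\<forall>i. z (t + i) = x" by (simp add: z_def)
  interpret Z: run_space two_letters A z by (rule run_space[OF z])
  have stake_state: "{r. r !! t = q} = {r. stake (Suc t) r \<in> {xs. xs ! t = q}}"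
    by (simp only: mem_Collect_eq stake_nth[OF lessI])
  have reach_z: "measure Z.P {r. r !! t = q} = measure (run_measure A u) {r. r !! t = q}"
    unfolding stake_state using run_space[OF z] run_space[OF u]
    by (intro measure_stake_eq_if_prefix_eq) (auto simp: z_def)
  have "AsLimAvg_val A z = 1"
    using computes_sum z freq_sum_eventually_const[of t z x] x by (auto simp: z_def)
  then have "AE r in Z.P. ereal (1 - eps / 2) \<le> LimAvg (run_weights A z r)"
    using eps_pos by (intro Z.AE_LimAvg_ge_if_less_AsLimAvg_val) simp
  note tendsto_0 = Z.measure_late_bad_window_tendsto_0[OF eps_pos eps_le_1 this, of t]
  have "0 < \<delta> * measure Z.P {r. r !! t = q}" using \<delta> reach reach_z by simp
  from order_tendstoD(2)[OF tendsto_0 this]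
  obtain N where N: "measure Z.P {r. \<exists>m\<ge>N. (\<Sum>i<m. run_weights A z r (t + i)) < (1 - eps) * real m}
      < \<delta> * measure Z.P {r. r !! t = q}"
    by (auto simp: eventually_sequentially)
  show ?thesis
  proof (intro exI allI impI)
    fix N' H assume "N \<le> N'"
    have "{r. r !! t = q \<and> stake (Suc H) (sdrop t r) \<in> bad_prefixes x N' H}
        \<subseteq> {r. \<exists>m\<ge>N. (\<Sum>i<m. run_weights A z r (t + i)) < (1 - eps) * real m}"
    proof safe
      fix r assume "stake (Suc H) (sdrop t r) \<in> bad_prefixes x N' H"
      from late_bad_window_if_bad_prefix[OF shift this] \<open>N \<le> N'\<close>
      show "\<exists>m\<ge>N. (\<Sum>i<m. run_weights A z r (t + i)) < (1 - eps) * real m" by (meson le_trans)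
    qed
    then have "measure Z.P {r. r !! t = q \<and> stake (Suc H) (sdrop t r) \<in> bad_prefixes x N' H}
        < \<delta> * measure Z.P {r. r !! t = q}"
      using N by (rule le_less_trans[OF Z.p.finite_measure_mono[OF _ Z.sets_P_late_bad_window]])
    moreover have "(\<lambda>i. z (t + i)) = (\<lambda>_. x)" using shift by simp
    ultimately show "measure (run_measure (from_state A q) (\<lambda>_. x)) {r. stake (Suc H) r \<in> bad_prefixes x N' H} \<le> \<delta>"
      using Z.measure_state_and_window[OF q, of t H "bad_prefixes x N' H"] reach reach_z
      by (simp add: mult.commute)
  qed
qed

end

context sum_of_freqs_automaton
begin

lemma bad_prefixes_prob_small_uniform:
  assumes "0 < \<delta>"
  shows "\<exists>N. \<forall>q\<in>reachable. \<forall>x\<in>two_letters. \<forall>N'\<ge>N. \<forall>H.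
    measure (run_measure (from_state A q) (\<lambda>_. x)) {r. stake (Suc H) r \<in> bad_prefixes x N' H} \<le> \<delta>"
proof -
  let ?good = "\<lambda>y N. \<forall>N'\<ge>N. \<forall>H. measure (run_measure (from_state A (fst y)) (\<lambda>_. snd y))
      {r. stake (Suc H) r \<in> bad_prefixes (snd y) N' H} \<le> \<delta>"
  have "\<forall>y\<in>reachable \<times> two_letters. \<exists>N. ?good y N"
    using bad_prefixes_prob_small[OF _ _ assms] by auto
  then obtain f where f: "\<forall>y\<in>reachable \<times> two_letters. ?good y (f y)"
    by (metis bchoice)
  define N where "N = Max (f ` (reachable \<times> two_letters))"
  have "finite (reachable \<times> two_letters)" using finite_states by (auto simp: reachable_def two_letters_def)
  then have f_le: "f (q, x) \<le> N" if "q \<in> reachable" "x \<in> two_letters" for q x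
    using that unfolding N_def by (intro Max_ge) auto
  show ?thesis
  proof (intro exI[of _ N] ballI allI impI)
    fix q x N' H assume "q \<in> reachable" "x \<in> two_letters" "N \<le> N'"
    moreover from this have "f (q, x) \<le> N'" using f_le le_trans by blast
    ultimately show "measure (run_measure (from_state A q) (\<lambda>_. x)) {r. stake (Suc H) r \<in> bad_prefixes x N' H} \<le> \<delta>"
      using f[rule_format, of "(q, x)" N' H] by simp
  qed
qed

definition window_threshold :: "nat \<Rightarrow> nat" where
  "window_threshold k = (SOME N. \<forall>q\<in>reachable. \<forall>x\<in>two_letters. \<forall>N'\<ge>N. \<forall>H.
     measure (run_measure (from_state A q) (\<lambda>_. x)) {r. stake (Suc H) r \<in> bad_prefixes x N' H} \<le> (1/2)^k)"

lemma window_threshold: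
  assumes "q \<in> reachable" "x \<in> two_letters" "window_threshold k \<le> N'"
  shows "measure (run_measure (from_state A q) (\<lambda>_. x)) {r. stake (Suc H) r \<in> bad_prefixes x N' H} \<le> (1/2)^k"
  using someI_ex[OF bad_prefixes_prob_small_uniform[of "(1/2)^k"]] assms
  unfolding window_threshold_def by auto

text \<open>The first three summands make the blocks grow fast enough for both frequencies to vanish, make
  block \<open>k\<close> longer than \<open>window_threshold k\<close>, and make \<open>window_threshold (k + 1)\<close> at most
  \<open>eps\<close> times the length of the blocks before it.\<close>

primrec block_start :: "nat \<Rightarrow> nat" where
  "block_start 0 = 0"
| "block_start (Suc k) = (k + 2) * block_start k + window_threshold k
     + 4 * (weight_bound + 2) * window_threshold (Suc k) + 1"

definition block_len :: "nat \<Rightarrow> nat" where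
  "block_len k = block_start (Suc k) - block_start k"

abbreviation hard_word :: "nat \<Rightarrow> nat" where
  "hard_word \<equiv> block_word block_start"

lemma strict_mono_block_start: "strict_mono block_start"
  by (rule strict_monoI_Suc) simp

lemma block_start_Suc: "block_start (Suc k) = block_start k + block_len k"
  using strict_monoD[OF strict_mono_block_start, of k "Suc k"] by (simp add: block_len_def)

lemma block_start_growth: "(real k + 2) * real (block_start k) \<le> real (block_start (Suc k))"
proof -
  have "(k + 2) * block_start k \<le> block_start (Suc k)" by simp
  then have "real ((k + 2) * block_start k) \<le> real (block_start (Suc k))" by (simp only: of_nat_le_iff)
  then show ?thesis by (simp add: algebra_simps)
qed

lemma window_threshold_le_block_len: "window_threshold k \<le> block_len k"
  by (simp add: block_len_def)

lemma window_threshold_small: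
  assumes "1 \<le> k"
  shows "real (window_threshold k) \<le> eps * real (block_start k)"
proof -
  obtain j where j: "k = Suc j" using assms by (cases k) auto
  have "real (4 * (weight_bound + 2) * window_threshold k) \<le> real (block_start k)"
    by (simp only: of_nat_le_iff) (simp add: j)
  then show ?thesis by (simp add: eps_def field_simps)
qed

lemma hard_word_block: "i < block_len k \<Longrightarrow> hard_word (block_start k + i) = k mod 2"
  using block_start_Suc[of k] by (intro block_word_eq[OF strict_mono_block_start]) linarith+

lemma AsLimAvg_val_hard_word: "AsLimAvg_val A hard_word = 0"
  using computes_sum block_word_in_words
    freq_block_word[OF strict_mono_block_start block_start_growth] by simp

definition bad_block :: "nat \<Rightarrow> nat stream set" where
  "bad_block k = {r. stake (Suc (block_len k)) (sdrop (block_start k) r)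
                      \<in> bad_prefixes (k mod 2) (window_threshold k) (block_len k)}"

sublocale hard: run_space two_letters A hard_word
  by (rule run_space[OF block_word_in_words])

lemma sets_bad_block: "bad_block k \<in> sets hard.P"
  unfolding bad_block_def hard.sets_P by (rule sets_stake_sdrop_preimage)

text \<open>The state at the start of block \<open>k\<close> is reachable whenever it has positive probability,
  and only the letters of block \<open>k\<close> matter for the window inside it.\<close>

lemma measure_state_and_bad_block_le:
  assumes q: "q \<in> states A"
  shows "measure hard.P {r. r !! block_start k = q \<and> r \<in> bad_block k} \<le> (1/2)^k"
proof -
  let ?L = "bad_prefixes (k mod 2) (window_threshold k) (block_len k)"
  let ?p = "measure hard.P {r. r !! block_start k = q}"
  have split: "measure hard.P {r. r !! block_start k = q \<and> r \<in> bad_block k} = ?p *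
      measure (run_measure (from_state A q) (\<lambda>i. hard_word (block_start k + i))) {r. stake (Suc (block_len k)) r \<in> ?L}"
    unfolding bad_block_def mem_Collect_eq by (rule hard.measure_state_and_window[OF q])
  show ?thesis
  proof (cases "?p = 0")
    case False
    then have "0 < ?p" using measure_nonneg[of hard.P] by (simp add: less_le)
    then have "q \<in> reachable" using q block_word_in_words unfolding reachable_def by blast
    have "k mod 2 \<in> two_letters" by (auto simp: two_letters_def)
    have "measure (run_measure (from_state A q) (\<lambda>i. hard_word (block_start k + i))) {r. stake (Suc (block_len k)) r \<in> ?L}
        = measure (run_measure (from_state A q) (\<lambda>_. k mod 2)) {r. stake (Suc (block_len k)) r \<in> ?L}"
    proof (rule measure_stake_eq_if_prefix_eq)
      show "run_space two_letters (from_state A q) (\<lambda>i. hard_word (block_start k + i))"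
        by (rule run_space_from_state[OF hard.run_space_axioms q])
      show "run_space two_letters (from_state A q) (\<lambda>_. k mod 2)"
        using run_space_from_state[OF run_space q, of "\<lambda>_. k mod 2" 0] \<open>k mod 2 \<in> two_letters\<close>
        by (simp add: words_def)
    qed (simp add: hard_word_block)
    also have "\<dots> \<le> (1/2)^k"
      by (rule window_threshold[OF \<open>q \<in> reachable\<close> \<open>k mod 2 \<in> two_letters\<close> order.refl])
    finally have "?p * measure (run_measure (from_state A q) (\<lambda>i. hard_word (block_start k + i)))
        {r. stake (Suc (block_len k)) r \<in> ?L} \<le> 1 * (1/2)^k"
      by (intro mult_mono hard.p.prob_le_1) auto
    then show ?thesis using split by simp
  qed (simp add: split)
qed

lemma measure_bad_block_le: "measure hard.P (bad_block k) \<le> real (card (states A)) * (1/2)^k"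
proof -
  define F where "F q = {r. r !! block_start k = q \<and> r \<in> bad_block k}" for q
  have sets_F: "F q \<in> sets hard.P" for q
  proof -
    have "{r. r !! block_start k = q} = {r. stake (Suc (block_start k)) r \<in> {xs. xs ! block_start k = q}}"
      by (simp only: mem_Collect_eq stake_nth[OF lessI])
    then have "{r. r !! block_start k = q} \<in> sets hard.P" by (simp only: hard.sets_P_stake)
    then show ?thesis using sets_bad_block unfolding F_def by (simp add: Collect_conj_eq Collect_mem_eq)
  qed
  have "measure hard.P (bad_block k) = measure hard.P (\<Union>q\<in>states A. F q)"
    using hard.AE_run_in_states sets_bad_block sets_F finite_states
    by (intro measure_eq_AE) (auto simp: F_def elim!: eventually_mono)
  also have "\<dots> \<le> (\<Sum>q\<in>states A. measure hard.P (F q))"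
    using finite_states sets_F by (intro hard.p.finite_measure_subadditive_finite) auto
  also have "\<dots> \<le> (\<Sum>q\<in>states A. (1/2)^k)"
    unfolding F_def by (intro sum_mono measure_state_and_bad_block_le)
  finally show ?thesis by simp
qed

lemma AE_LimAvg_hard_word: "AE r in hard.P. ereal (1/2) \<le> LimAvg (run_weights A hard_word r)"
proof -
  have "summable (\<lambda>k. measure hard.P (bad_block k))"
    by (rule summable_comparison_test[of _ "\<lambda>k. real (card (states A)) * (1/2)^k"])
      (use measure_bad_block_le in auto)
  then have "AE r in hard.P. eventually (\<lambda>k. r \<in> space hard.P - bad_block k) sequentially"
    by (intro borel_cantelli_AE1[OF sets_bad_block]) (auto simp: less_top[symmetric])
  then show ?thesis
    using hard.AE_run_in_states
  proof eventually_elim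
    case (elim r)
    then obtain K where K: "\<And>k. K \<le> k \<Longrightarrow> r \<notin> bad_block k"
      by (auto simp: eventually_sequentially hard.space_P)
    show ?case
    proof (rule LimAvg_ge_of_good_blocks[OF _ strict_mono_block_start eps_pos eps_bound])
      show "\<bar>run_weights A hard_word r i\<bar> \<le> real weight_bound" for i
        unfolding run_weights_def using elim block_word_in_words
        by (intro abs_weight_le_weight_bound) (auto simp: words_def simp del: snth.simps)
      show "window_threshold k \<le> block_start (Suc k) - block_start k" for k
        using window_threshold_le_block_len by (simp add: block_len_def)
      show "real (window_threshold k) \<le> eps * real (block_start k)" if "1 \<le> k" for k
        using window_threshold_small[OF that] .
      fix k m assume km: "K \<le> k" "window_threshold k \<le> m" "m \<le> block_start (Suc k) - block_start k"
      then have "m \<le> block_len k" by (simp add: block_len_def)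
      let ?prefix = "stake (Suc (block_len k)) (sdrop (block_start k) r)"
      have "\<not> (\<Sum>i<m. real_of_rat (weight A (?prefix ! i) (k mod 2) (?prefix ! Suc i))) < (1 - eps) * real m"
        using K[OF km(1)] km(2) \<open>m \<le> block_len k\<close> unfolding bad_block_def bad_prefixes_def by auto
      moreover have "(\<Sum>i<m. real_of_rat (weight A (?prefix ! i) (k mod 2) (?prefix ! Suc i)))
          = (\<Sum>i<m. real_of_rat (weight A (r !! (block_start k + i)) (k mod 2) (r !! Suc (block_start k + i))))"
        by (rule sum_stake_sdrop[OF \<open>m \<le> block_len k\<close>])
      moreover have "\<dots> = (\<Sum>i<m. run_weights A hard_word r (block_start k + i))"
        using \<open>m \<le> block_len k\<close> by (intro sum.cong) (auto simp: run_weights_def hard_word_block)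
      ultimately show "(1 - eps) * real m \<le> (\<Sum>i<m. run_weights A hard_word r (block_start k + i))"
        by linarith
    qed
  qed
qed

end

theorem no_automaton_sums_freqs:
  "\<not> (\<exists>A. wf_pwa two_letters A \<and> (\<forall>w\<in>words two_letters. AsLimAvg_val A w = freq 0 w + freq 1 w))"
proof
  assume "\<exists>A. wf_pwa two_letters A \<and> (\<forall>w\<in>words two_letters. AsLimAvg_val A w = freq 0 w + freq 1 w)"
  then obtain A where "sum_of_freqs_automaton A" by (auto simp: sum_of_freqs_automaton_def)
  then interpret sum_of_freqs_automaton A .
  show False
    using hard.AsLimAvg_val_ge_if_AE[OF AE_LimAvg_hard_word] AsLimAvg_val_hard_word by simp
qed

theorem lemma26:
  shows "\<exists>Sig A1 A2. finite Sig \<and> Sig \<noteq> {} \<and> wf_pwa Sig A1 \<and> wf_pwa Sig A2 \<and>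
    \<not> (\<exists>A. wf_pwa Sig A \<and>
          (\<forall>w \<in> words Sig. AsLimAvg_val A w = AsLimAvg_val A1 w + AsLimAvg_val A2 w))"
proof (intro exI conjI)
  show "finite two_letters" "two_letters \<noteq> {}" by (simp_all add: two_letters_def)
  show "wf_pwa two_letters (letter_counter 0)" "wf_pwa two_letters (letter_counter 1)"
    by (rule wf_letter_counter)+
  show "\<not> (\<exists>A. wf_pwa two_letters A \<and> (\<forall>w\<in>words two_letters.
      AsLimAvg_val A w = AsLimAvg_val (letter_counter 0) w + AsLimAvg_val (letter_counter 1) w))"
    using no_automaton_sums_freqs AsLimAvg_val_letter_counter by simp
qed

end
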